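(* Let $w,x\in\{0,1\}^{\mathbb Z}$ be periodic with $w\le x$, let $\rho$ be the unique $\sigma\times\sigma$-invariant probability measure on the (finite) orbit of $(w,x)$, and let $\varphi\colon\{0,1\}^{\mathbb Z}\to\mathbb R$ be of the form $\varphi(y)=\varphi(y_0,y_1)$. Then \[ \mathcal P_{[w,x],\varphi}=\log_2\lambda_++\sum_{a,b\in\{0,1\}}\sum_{\ell\ge2}m_{a,b}^\ell\log_2C_{a,b}^++\sum_{a,b\in\{0,1\}}\sum_{\ell\ge2}m_{a,b}^\ell\log_2\Big(1+\frac{C_{a,b}^-}{C_{a,b}^+}\Big(\frac{\lambda_-}{\lambda_+}\Big)^{\ell-1}\Big), \] where $m_{a,b}^\ell:=\rho\big(\{(u,v):u_0=a,\ v_0=a,\ u_j=0,\ v_j=1\ (1\le j\le\ell-2),\ u_{\ell-1}=v_{\ell-1}=b\}\big)$ (all sums are finite).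
   Context: $\sigma$ is the left shift; $\le$ is coordinatewise; $[w,x]=\{\sigma^ny:w\le y\le x,\ n\in\mathbb Z\}$ (closed here since $w,x$ are periodic). Let $\mathbf M=\begin{pmatrix}2^{\varphi(0,0)}&2^{\varphi(0,1)}\\2^{\varphi(1,0)}&2^{\varphi(1,1)}\end{pmatrix}$; it has two distinct real eigenvalues $\lambda_-<\lambda_+$ with $\lambda_+>|\lambda_-|$, $\lambda_+>0$. For $a,b\in\{0,1\}$ the constants $C_{a,b}^\pm$ are the unique reals with $(\mathbf M^{n-1})_{a,b}=C_{a,b}^+\lambda_+^{n-1}+C_{a,b}^-\lambda_-^{n-1}$ for all $n\ge1$; one has $C_{a,b}^+>0$. Topological pressure: $\mathcal P_{X,\varphi}=\lim_n\frac1n\log_2\sum_{A\in\mathcal L_n(X)}2^{\sup_{y\in A}\varphi^{(n)}(y)}$, with $\mathcal L_n(X)$ the $n$-blocks of $X$ and $\varphi^{(n)}=\sum_{j<n}\varphi\circ\sigma^j$. *)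

theory Defs
  imports "HOL-Analysis.Analysis" "HOL-Probability.Probability"
begin

text \<open>Points of the full shift: bi-infinite 0/1 sequences, with False = 0, True = 1.
  The order on \<open>int \<Rightarrow> bool\<close> is the pointwise (coordinatewise) order.\<close>

type_synonym seq = "int \<Rightarrow> bool"

definition shift :: "int \<Rightarrow> seq \<Rightarrow> seq" where
  "shift n y = (\<lambda>i. y (i + n))"

definition periodic :: "seq \<Rightarrow> bool" where
  "periodic y \<longleftrightarrow> (\<exists>p::int. p > 0 \<and> (\<forall>i. y (i + p) = y i))"

definition interval_set :: "seq \<Rightarrow> seq \<Rightarrow> seq set" where
  "interval_set w x = {shift n y | y n. w \<le> y \<and> y \<le> x}"

definition pair_orbit :: "seq \<Rightarrow> seq \<Rightarrow> (seq \<times> seq) set" where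
  "pair_orbit w x = {(shift n w, shift n x) | n. True}"

definition blocks :: "seq set \<Rightarrow> nat \<Rightarrow> bool list set" where
  "blocks X n = {A. \<exists>y\<in>X. \<exists>k::int. A = map (\<lambda>i. y (k + int i)) [0..<n]}"

definition birkhoff :: "(seq \<Rightarrow> real) \<Rightarrow> nat \<Rightarrow> seq \<Rightarrow> real" where
  "birkhoff \<phi> n y = (\<Sum>j<n. \<phi> (shift (int j) y))"

text \<open>The n-th term of the sequence whose limit is the topological pressure;
  the sup over \<open>y \<in> A\<close> ranges over the points of X in the cylinder of A.\<close>
definition pressure_seq :: "seq set \<Rightarrow> (seq \<Rightarrow> real) \<Rightarrow> nat \<Rightarrow> real" where
  "pressure_seq X \<phi> n = (1 / real n) * log 2
     (\<Sum>A\<in>blocks X n. 2 powr (SUP y\<in>{y\<in>X. map (\<lambda>i. y (int i)) [0..<n] = A}. birkhoff \<phi> n y))"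

primrec matpow :: "real^bool^bool \<Rightarrow> nat \<Rightarrow> real^bool^bool" where
  "matpow A 0 = mat 1"
| "matpow A (Suc n) = A ** matpow A n"

definition is_eigenvalue :: "real^bool^bool \<Rightarrow> real \<Rightarrow> bool" where
  "is_eigenvalue A l \<longleftrightarrow> (\<exists>v. v \<noteq> 0 \<and> A *v v = l *\<^sub>R v)"

end

theory Submission
  imports Defs
begin

(* A point of [w, x] is a shift of a sequence squeezed between w and x, so its blocks of length
   n + 1 are the words whose i-th letter lies in {w (k + i), x (k + i)} for some phase k modulo the
   common period P of w and x.  Up to a bounded factor (the last term of the Birkhoff sum) the
   partition function is therefore a sum of entries of the restricted products
   D_k M D_(k+1) ... M D_(k+n), where D_i projects onto the letters allowed at i.  If no position
   is forced (w i = x i) these are the powers of M, which grow like lambda_+^n.  Otherwise, over one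
   period starting at a forced position the product collapses to q times a rank-one projection, so
   the growth rate is lambda_+ q^(1/P); and q factors over the gaps between consecutive forced
   positions into entries of (M / lambda_+)^l = C^+ + C^- (lambda_- / lambda_+)^l.  The gaps of
   length l - 1 from symbol a to symbol b are counted, per period, by m_(a,b)^l. *)

lemma sum_UNIV_bool: "(\<Sum>c\<in>UNIV. g c) = g False + g (True::bool)"
  by (simp add: UNIV_bool)

lemma matmul_entry: "(A ** B) $ i $ j = (\<Sum>k\<in>UNIV. A $ i $ k * B $ k $ j)"
  by (simp add: matrix_matrix_mult_def)

lemma mat1_entry: "(mat 1 :: real^bool^bool) $ i $ j = (if i = j then 1 else 0)"
  by (simp add: mat_def)

lemma matmul_entry_ge:
  fixes A :: "real^'n::finite^'m" and B :: "real^'p^'n"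
  assumes "\<And>i j. A $ i $ j \<ge> 0" and "\<And>i j. B $ i $ j \<ge> 0"
  shows "A $ i $ k * B $ k $ j \<le> (A ** B) $ i $ j"
  unfolding matmul_entry by (rule member_le_sum) (auto intro: assms mult_nonneg_nonneg)

lemma matpow_Suc_right: "matpow A (Suc n) = matpow A n ** A"
  by (induction n) (simp_all add: matrix_mul_lid matrix_mul_rid matrix_mul_assoc)

lemma matpow_scaleR: "matpow (c *\<^sub>R A) n = c ^ n *\<^sub>R matpow A n"
  by (induction n) (simp_all add: matrix_scalar_ac scalar_matrix_assoc mult.commute)

lemma matpow_nonneg:
  assumes "\<And>a b. A $ a $ b \<ge> 0"
  shows "matpow A n $ a $ b \<ge> 0"
  by (induction n arbitrary: a b) (simp_all add: mat1_entry matmul_entry assms sum_nonneg)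

lemma matpow_pos:
  assumes "\<And>a b. A $ a $ b > 0" and "n > 0"
  shows "matpow A n $ a $ b > 0"
  using \<open>n > 0\<close>
proof (induction n arbitrary: a b)
  case (Suc n)
  then show ?case
    using assms(1) by (cases n) (auto simp: matmul_entry sum_UNIV_bool mat1_entry add_pos_pos)
qed simp

lemma matpow_eigenvector:
  assumes "A *v v = l *\<^sub>R v"
  shows "matpow A n *v v = l ^ n *\<^sub>R v"
  by (induction n) (simp_all add: matrix_vector_mul_lid matrix_vector_mult_scaleR assms
      flip: matrix_vector_mul_assoc)

lemma periodic_mult:
  fixes g :: "int \<Rightarrow> 'a"
  assumes "\<And>i. g (i + p) = g i"
  shows "g (i + p * t) = g i"
proof -
  have nat_mult: "g (j + p * int n) = g j" for j n
    by (induction n arbitrary: j) (simp_all add: algebra_simps assms flip: add.assoc)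
  show ?thesis
  proof (cases "t \<ge> 0")
    case True
    then show ?thesis using nat_mult[of i "nat t"] by simp
  next
    case False
    then show ?thesis using nat_mult[of "i + p * t" "nat (- t)"] by simp
  qed
qed

definition entry_sum :: "real^'n::finite^'m::finite \<Rightarrow> real" where
  "entry_sum A = (\<Sum>a\<in>UNIV. \<Sum>b\<in>UNIV. A $ a $ b)"

lemma entry_sum_scaleR: "entry_sum (c *\<^sub>R A) = c * entry_sum A"
  by (simp add: entry_sum_def sum_distrib_left)

lemma sum_periodic_shift:
  fixes h :: "int \<Rightarrow> 'a::comm_monoid_add"
  assumes per: "\<And>t. h (t + int p) = h t" and "p > 0"
  shows "(\<Sum>i<p. h (a + int i)) = (\<Sum>i<p. h (int i))"
proof -
  obtain p' where p: "p = Suc p'" using \<open>p > 0\<close> by (cases p) auto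
  have step: "(\<Sum>i<p. h (b + 1 + int i)) = (\<Sum>i<p. h (b + int i))" for b
  proof -
    have "(\<Sum>i<p. h (b + int i)) = h b + (\<Sum>i<p'. h (b + 1 + int i))"
      unfolding p by (subst sum.lessThan_Suc_shift) (simp add: algebra_simps)
    moreover have "(\<Sum>i<p. h (b + 1 + int i)) = (\<Sum>i<p'. h (b + 1 + int i)) + h b"
      using per[of b] by (simp add: p add.assoc)
    ultimately show ?thesis by (simp add: add.commute)
  qed
  show ?thesis
  proof (induction a rule: int_induct[where k = 0])
    case (step1 i)
    then show ?case using step[of i] by simp
  next
    case (step2 i)
    then show ?case using step[of "i - 1"] by simp
  qed simp
qed

lemma convergent_pos_bounds:
  fixes g :: "nat \<Rightarrow> real"
  assumes pos: "\<And>n. g n > 0" and lim: "g \<longlonglongrightarrow> L" and "L > 0"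
  obtains c C where "c > 0" and "C > 0" and "\<And>n. c \<le> g n \<and> g n \<le> C"
proof -
  obtain N where N: "\<And>n. n \<ge> N \<Longrightarrow> L / 2 < g n"
    using order_tendstoD(1)[OF lim, of "L / 2"] \<open>L > 0\<close> by (auto simp: eventually_sequentially)
  obtain C where C: "C > 0" "\<And>n. norm (g n) \<le> C"
    using convergent_imp_Bseq[OF convergentI[OF lim]] by (auto simp: Bseq_def)
  define c where "c = Min (insert (L / 2) (g ` {..<N}))"
  have "c > 0" unfolding c_def using \<open>L > 0\<close> pos by (subst Min_gr_iff) auto
  moreover have "c \<le> g n" for n
  proof (cases "n < N")
    case False
    have "c \<le> L / 2" unfolding c_def by (intro Min_le) auto
    then show ?thesis using N[of n] False by auto
  qed (auto simp: c_def intro: Min_le)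
  moreover have "g n \<le> C" for n using C(2)[of n] by auto
  ultimately show ?thesis using C(1) that by blast
qed

lemma eventually_periodic_initial_value:
  fixes r :: "nat \<Rightarrow> 'a"
  assumes "p > 0" and "\<And>n. n \<ge> n0 \<Longrightarrow> r (n + p) = r n"
  shows "r n \<in> r ` {..<n0 + p}"
proof (induction n rule: less_induct)
  case (less n)
  show ?case
  proof (cases "n < n0 + p")
    case False
    then have "n = (n - p) + p" "n - p \<ge> n0" "n - p < n" using \<open>p > 0\<close> by auto
    then show ?thesis using assms(2)[of "n - p"] less[of "n - p"] by metis
  qed simp
qed

text \<open>Divided by \<open>root p q ^ n\<close> the sequences become eventually periodic, so they take only
  finitely many (positive) values.\<close>
lemma eventually_periodic_growth_bounds:
  fixes g :: "'k \<Rightarrow> nat \<Rightarrow> real"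
  assumes "finite K" and "p > 0" and "q > 0"
    and pos: "\<And>k n. k \<in> K \<Longrightarrow> g k n > 0"
    and rec: "\<And>k n. k \<in> K \<Longrightarrow> n \<ge> n0 \<Longrightarrow> g k (n + p) = q * g k n"
  obtains c C where "c > 0" and "C > 0"
    and "\<And>k n. k \<in> K \<Longrightarrow> c * root p q ^ n \<le> g k n \<and> g k n \<le> C * root p q ^ n"
proof -
  define B where "B = root p q"
  have B: "B > 0" "B ^ p = q" using \<open>p > 0\<close> \<open>q > 0\<close> by (auto simp: B_def real_root_pow_pos)
  define r where "r k n = g k n / B ^ n" for k n
  have r_per: "r k (n + p) = r k n" if "k \<in> K" "n \<ge> n0" for k n
    using rec[OF that] B \<open>q > 0\<close> by (simp add: r_def power_add)
  define R where "R = (\<lambda>(k, n). r k n) ` (K \<times> {..<n0 + p})"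
  have "finite R" using \<open>finite K\<close> by (simp add: R_def)
  have in_R: "r k n \<in> R" if "k \<in> K" for k n
    using eventually_periodic_initial_value[of p n0 "r k" n] r_per[OF that] \<open>p > 0\<close> that
    by (auto simp: R_def)
  have R_pos: "\<forall>y\<in>R. y > 0" using pos B by (auto simp: R_def r_def)
  show ?thesis
  proof (cases "K = {}")
    case True
    then show ?thesis using that[of 1 1] by auto
  next
    case False
    then have "R \<noteq> {}" using in_R by blast
    have "Min R * B ^ n \<le> g k n \<and> g k n \<le> Max R * B ^ n" if "k \<in> K" for k n
    proof -
      have "Min R \<le> r k n" "r k n \<le> Max R" using in_R[OF that] \<open>finite R\<close> by auto
      moreover have "g k n = r k n * B ^ n" using B by (simp add: r_def)
      ultimately show ?thesis using B by (simp add: mult_right_mono)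
    qed
    moreover have "Min R > 0" "Max R > 0" using R_pos \<open>finite R\<close> \<open>R \<noteq> {}\<close> by auto
    ultimately show ?thesis using that unfolding B_def by blast
  qed
qed

lemma log_growth_rate_tendsto:
  fixes Z :: "nat \<Rightarrow> real"
  assumes "c > 0" and "G > 0"
    and lower: "\<And>n. c * G ^ n \<le> Z (Suc n)" and upper: "\<And>n. Z (Suc n) \<le> C * G ^ n"
  shows "(\<lambda>m. 1 / real m * log 2 (Z m)) \<longlonglongrightarrow> log 2 G"
proof -
  have "C > 0" using lower[of 0] upper[of 0] \<open>c > 0\<close> by simp
  have lim: "(\<lambda>n. (log 2 d + real n * log 2 G) / real (Suc n)) \<longlonglongrightarrow> log 2 G" for d
  proof -
    have "(\<lambda>n. log 2 G + (log 2 d - log 2 G) * inverse (real (Suc n)))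
        \<longlonglongrightarrow> log 2 G + (log 2 d - log 2 G) * 0"
      by (intro tendsto_intros LIMSEQ_inverse_real_of_nat)
    then show ?thesis by (simp add: field_simps)
  qed
  have log_bounds: "log 2 (d * G ^ n) \<le> log 2 (Z (Suc n)) \<and> log 2 (Z (Suc n)) \<le> log 2 (D * G ^ n)"
    if "d > 0" "d * G ^ n \<le> Z (Suc n)" "Z (Suc n) \<le> D * G ^ n" for d D n
  proof -
    have "d * G ^ n > 0" using \<open>d > 0\<close> \<open>G > 0\<close> by simp
    with that show ?thesis by (subst (1 2) log_le_cancel_iff) auto
  qed
  have "(\<lambda>n. 1 / real (Suc n) * log 2 (Z (Suc n))) \<longlonglongrightarrow> log 2 G"
  proof (rule tendsto_sandwich[OF _ _ lim[of c] lim[of C]])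
    show "\<forall>\<^sub>F n in sequentially. (log 2 c + real n * log 2 G) / real (Suc n)
            \<le> 1 / real (Suc n) * log 2 (Z (Suc n))"
      "\<forall>\<^sub>F n in sequentially. 1 / real (Suc n) * log 2 (Z (Suc n))
            \<le> (log 2 C + real n * log 2 G) / real (Suc n)"
      using log_bounds[OF \<open>c > 0\<close> lower upper] \<open>c > 0\<close> \<open>C > 0\<close> \<open>G > 0\<close>
      by (auto simp: log_mult log_nat_power divide_right_mono)
  qed
  then show ?thesis by (rule LIMSEQ_imp_Suc[where f = "\<lambda>m. 1 / real m * log 2 (Z m)"])
qed

lemma shift_mod_periodic:
  assumes "\<And>i. g (i + p) = g i"
  shows "shift n g = shift (n mod p) g"
proof -
  have "g (i + n) = g (i + n mod p)" for i
    using periodic_mult[of g p, OF assms, of "i + n mod p" "n div p"]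
    by (metis add.assoc mult_div_mod_eq add.commute)
  then show ?thesis by (simp add: shift_def fun_eq_iff)
qed

lemma all_int_interval_iff_nat:
  "(\<forall>j::int. 1 \<le> j \<and> j \<le> int l \<longrightarrow> P j) \<longleftrightarrow> (\<forall>j::nat. 1 \<le> j \<and> j \<le> l \<longrightarrow> P (int j))"
proof (intro iffI allI impI)
  fix j :: int
  assume "\<forall>j::nat. 1 \<le> j \<and> j \<le> l \<longrightarrow> P (int j)" and "1 \<le> j \<and> j \<le> int l"
  moreover have "1 \<le> nat j" "nat j \<le> l" "int (nat j) = j" using \<open>1 \<le> j \<and> j \<le> int l\<close> by auto
  ultimately show "P j" by metis
qed auto

lemma sum_swap_innermost:
  "(\<Sum>a\<in>A. \<Sum>b\<in>B. \<Sum>l\<in>L. \<Sum>t\<in>T. F a b l t) = (\<Sum>t\<in>T. \<Sum>a\<in>A. \<Sum>b\<in>B. \<Sum>l\<in>L. F a b l t)"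
proof -
  have "(\<Sum>a\<in>A. \<Sum>b\<in>B. \<Sum>l\<in>L. \<Sum>t\<in>T. F a b l t) = (\<Sum>a\<in>A. \<Sum>b\<in>B. \<Sum>t\<in>T. \<Sum>l\<in>L. F a b l t)"
    by (rule sum.cong[OF refl], rule sum.cong[OF refl], rule sum.swap)
  also have "\<dots> = (\<Sum>a\<in>A. \<Sum>t\<in>T. \<Sum>b\<in>B. \<Sum>l\<in>L. F a b l t)"
    by (rule sum.cong[OF refl], rule sum.swap)
  also have "\<dots> = (\<Sum>t\<in>T. \<Sum>a\<in>A. \<Sum>b\<in>B. \<Sum>l\<in>L. F a b l t)"
    by (rule sum.swap)
  finally show ?thesis .
qed

section \<open>The normalized transfer matrix\<close>

locale interval_pressure =
  fixes w x :: seq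
    and f :: "bool \<Rightarrow> bool \<Rightarrow> real"
    and lp lm :: real
    and Cp Cm :: "bool \<Rightarrow> bool \<Rightarrow> real"
  assumes periodic_w: "periodic w" and periodic_x: "periodic x" and w_le_x: "w \<le> x"
    and eigenvalue_lp: "is_eigenvalue (\<chi> a b. 2 powr f a b) lp"
    and lp_pos: "lp > 0" and lp_gt_abs_lm: "lp > \<bar>lm\<bar>"
    and matpow_decomp: "\<And>a b n. n \<ge> 1 \<Longrightarrow> matpow (\<chi> a b. 2 powr f a b) (n - 1) $ a $ b
           = Cp a b * lp ^ (n - 1) + Cm a b * lm ^ (n - 1)"
begin

definition M :: "real^bool^bool" where "M = (\<chi> a b. 2 powr f a b)"

definition N :: "real^bool^bool" where "N = inverse lp *\<^sub>R M"

lemma M_entry: "M $ a $ b = 2 powr f a b"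
  by (simp add: M_def)

lemma M_eq: "M = lp *\<^sub>R N"
  using lp_pos by (simp add: N_def)

lemma N_pos: "N $ a $ b > 0"
  using lp_pos by (simp add: N_def M_entry)

lemma matpow_N_entry: "matpow N k $ a $ b = Cp a b + Cm a b * (lm / lp) ^ k"
proof -
  have "matpow M k $ a $ b = Cp a b * lp ^ k + Cm a b * lm ^ k"
    using matpow_decomp[of "Suc k" a b] by (simp add: M_def)
  then show ?thesis
    using lp_pos by (simp add: N_def matpow_scaleR field_simps power_divide)
qed

lemma matpow_N_pos: "k > 0 \<Longrightarrow> matpow N k $ a $ b > 0"
  using N_pos by (rule matpow_pos)

lemma matpow_N_tendsto: "(\<lambda>k. matpow N k $ a $ b) \<longlonglongrightarrow> Cp a b"
proof -
  have "(\<lambda>k. (lm / lp) ^ k) \<longlonglongrightarrow> 0"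
    using lp_gt_abs_lm lp_pos by (auto simp: abs_divide intro!: LIMSEQ_power_zero)
  from tendsto_add[OF tendsto_const tendsto_mult_left[OF this]]
  show ?thesis by (simp add: matpow_N_entry)
qed

lemma Cp_nonneg: "Cp a b \<ge> 0"
  by (rule LIMSEQ_le_const[OF matpow_N_tendsto]) (auto intro: matpow_nonneg less_imp_le N_pos)

lemma Cp_ge: "N $ c $ a * Cp a b * N $ b $ d \<le> Cp c d"
proof (rule LIMSEQ_le[OF _ LIMSEQ_ignore_initial_segment[OF matpow_N_tendsto, of 2]])
  show "(\<lambda>k. N $ c $ a * matpow N k $ a $ b * N $ b $ d) \<longlonglongrightarrow> N $ c $ a * Cp a b * N $ b $ d"
    by (intro tendsto_intros matpow_N_tendsto)
  have nonneg: "0 \<le> N $ i $ j" "0 \<le> matpow N k $ i $ j" for i j k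
    using N_pos by (auto intro: less_imp_le matpow_nonneg)
  then have nonneg_prod: "0 \<le> (matpow N k ** N) $ i $ j" for i j k
    by (simp only: flip: matpow_Suc_right)
  have "N $ c $ a * matpow N k $ a $ b * N $ b $ d \<le> matpow N (k + 2) $ c $ d" for k
  proof -
    have "N $ c $ a * (matpow N k $ a $ b * N $ b $ d) \<le> N $ c $ a * (matpow N k ** N) $ a $ d"
      using nonneg by (intro mult_left_mono matmul_entry_ge) auto
    also have "\<dots> \<le> (N ** (matpow N k ** N)) $ c $ d"
      using nonneg nonneg_prod by (intro matmul_entry_ge) auto
    finally show ?thesis
      by (simp only: add_2_eq_Suc' matpow.simps(2)[of N "Suc k"] matpow_Suc_right[of N k] mult.assoc)
  qed
  then show "\<exists>K. \<forall>k\<ge>K. N $ c $ a * matpow N k $ a $ b * N $ b $ d \<le> matpow N (k + 2) $ c $ d"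
    by blast
qed

text \<open>Perron-Frobenius in the form needed here: the \<open>\<lambda>\<^sub>+\<close>-eigenvector \<open>v\<close> is fixed by every
  \<open>N\<^sup>k\<close>, hence by their limit \<open>(C\<^sub>a\<^sub>,\<^sub>b\<^sup>+)\<close>, so some \<open>C\<^sub>a\<^sub>,\<^sub>b\<^sup>+\<close> is nonzero; positivity of \<open>N\<close>
  spreads it to all entries via \<open>Cp_ge\<close>.\<close>
lemma Cp_pos: "Cp a b > 0"
proof -
  obtain v where v: "v \<noteq> 0" "M *v v = lp *\<^sub>R v"
    using eigenvalue_lp by (auto simp: is_eigenvalue_def M_def)
  have "N *v v = v"
    using v(2) lp_pos by (simp add: N_def flip: scaleR_matrix_vector_assoc)
  then have fixed: "(\<Sum>j\<in>UNIV. matpow N k $ i $ j * v $ j) = v $ i" for i k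
    using matpow_eigenvector[of N v 1 k] by (simp add: matrix_vector_mult_def vec_eq_iff)
  have "\<exists>c d. Cp c d \<noteq> 0"
  proof (rule ccontr)
    assume "\<not> ?thesis"
    then have "(\<lambda>k. \<Sum>j\<in>UNIV. matpow N k $ i $ j * v $ j) \<longlonglongrightarrow> 0" for i
      using tendsto_sum[OF tendsto_mult_right[OF matpow_N_tendsto]] by fastforce
    then have "v $ i = 0" for i
      by (simp add: fixed LIMSEQ_const_iff)
    with v(1) show False by (simp add: vec_eq_iff)
  qed
  then obtain c d where "Cp c d > 0"
    using Cp_nonneg by (metis less_eq_real_def)
  then have "N $ a $ c * Cp c d * N $ d $ b > 0" using N_pos by simp
  then show ?thesis using Cp_ge by (rule less_le_trans)
qed

lemma log_matpow_N_entry: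
  "log 2 (matpow N (Suc l) $ a $ b)
     = log 2 (Cp a b) + log 2 (1 + Cm a b / Cp a b * (lm / lp) ^ Suc l)"
proof -
  have factor: "Cp a b + Cm a b * r = Cp a b * (1 + Cm a b / Cp a b * r)" for r
    using Cp_pos[of a b] by (simp add: field_simps)
  have "matpow N (Suc l) $ a $ b = Cp a b * (1 + Cm a b / Cp a b * (lm / lp) ^ Suc l)"
    unfolding matpow_N_entry by (rule factor)
  moreover have "matpow N (Suc l) $ a $ b > 0" by (rule matpow_N_pos) simp
  ultimately show ?thesis
    using Cp_pos[of a b] by (simp add: log_mult zero_less_mult_iff)
qed

section \<open>Admissible words and restricted products\<close>

lemma common_period_exists:
  "\<exists>p::nat. p > 0 \<and> (\<forall>i. w (i + int p) = w i \<and> x (i + int p) = x i)"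
proof -
  obtain p1 where p1: "p1 > 0" "\<And>i. w (i + p1) = w i" using periodic_w by (auto simp: periodic_def)
  obtain p2 where p2: "p2 > 0" "\<And>i. x (i + p2) = x i" using periodic_x by (auto simp: periodic_def)
  have "w (i + p1 * p2) = w i" "x (i + p1 * p2) = x i" for i
    using periodic_mult[of w p1 i p2, OF p1(2)] periodic_mult[of x p2 i p1, OF p2(2)]
    by (simp_all add: mult.commute)
  then show ?thesis using p1 p2 by (intro exI[of _ "nat (p1 * p2)"]) auto
qed

definition period :: nat where
  "period = (LEAST p. p > 0 \<and> (\<forall>i. w (i + int p) = w i \<and> x (i + int p) = x i))"

lemma period_pos: "period > 0" and w_period: "w (i + int period) = w i"
  and x_period: "x (i + int period) = x i"
  using LeastI_ex[OF common_period_exists] unfolding period_def[symmetric] by auto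

lemma period_minimal: "0 < p \<Longrightarrow> p < period \<Longrightarrow> \<exists>i. w (i + int p) \<noteq> w i \<or> x (i + int p) \<noteq> x i"
  using not_less_Least[of p "\<lambda>p. p > 0 \<and> (\<forall>i. w (i + int p) = w i \<and> x (i + int p) = x i)"]
  unfolding period_def[symmetric] by auto

lemma w_period_mult: "w (i + int period * t) = w i"
  by (rule periodic_mult) (rule w_period)

lemma x_period_mult: "x (i + int period * t) = x i"
  by (rule periodic_mult) (rule x_period)

lemma w_le_x_at: "w i \<le> x i"
  using w_le_x by (simp add: le_fun_def)

definition allowed :: "int \<Rightarrow> bool set" where "allowed i = {w i, x i}"

lemma allowed_period_mult: "allowed (i + int period * t) = allowed i"
  by (simp add: allowed_def w_period_mult x_period_mult)

lemma allowed_mod: "allowed (i mod int period + j) = allowed (i + j)"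
  by (metis allowed_period_mult add.commute add.left_commute mult_div_mod_eq)

lemma between_iff_allowed: "w i \<le> c \<and> c \<le> x i \<longleftrightarrow> c \<in> allowed i"
  using w_le_x_at[of i] by (cases c; cases "w i"; cases "x i") (auto simp: allowed_def)

definition diag_allowed :: "int \<Rightarrow> real^bool^bool" where
  "diag_allowed i = (\<chi> a b. if a = b \<and> a \<in> allowed i then 1 else 0)"

lemma diag_allowed_idem: "diag_allowed i ** diag_allowed i = diag_allowed i"
  by (auto simp: vec_eq_iff matmul_entry sum_UNIV_bool diag_allowed_def)

lemma diag_allowed_period_mult: "diag_allowed (i + int period * t) = diag_allowed i"
  by (simp add: diag_allowed_def allowed_period_mult)

text \<open>\<open>restricted_pow A k n = D\<^sub>k A D\<^sub>k\<^sub>+\<^sub>1 \<dots> A D\<^sub>k\<^sub>+\<^sub>n\<close> with \<open>D\<^sub>i = diag_allowed i\<close>: entry \<open>(a, b)\<close> sums the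
  weights of the words of length \<open>n + 1\<close> from \<open>a\<close> to \<open>b\<close> that are admissible from position \<open>k\<close>.\<close>
primrec restricted_pow :: "real^bool^bool \<Rightarrow> int \<Rightarrow> nat \<Rightarrow> real^bool^bool" where
  "restricted_pow A k 0 = diag_allowed k"
| "restricted_pow A k (Suc n) = restricted_pow A k n ** A ** diag_allowed (k + int (Suc n))"

lemma restricted_pow_diag_right: "restricted_pow A k n ** diag_allowed (k + int n) = restricted_pow A k n"
  by (cases n) (simp_all add: diag_allowed_idem flip: matrix_mul_assoc)

lemma restricted_pow_add:
  "restricted_pow A k (n + m) = restricted_pow A k n ** restricted_pow A (k + int n) m"
  by (induction m) (simp_all add: restricted_pow_diag_right matrix_mul_assoc ac_simps)

lemma restricted_pow_period_mult: "restricted_pow A (k + int period * t) n = restricted_pow A k n"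
proof (induction n)
  case (Suc n)
  have "k + int period * t + int (Suc n) = (k + int (Suc n)) + int period * t" by simp
  then show ?case
    by (simp only: restricted_pow.simps Suc.IH diag_allowed_period_mult)
qed (simp add: diag_allowed_period_mult)

lemma restricted_pow_scaleR: "restricted_pow (c *\<^sub>R A) k n = c ^ n *\<^sub>R restricted_pow A k n"
  by (induction n) (simp_all add: matrix_scalar_ac scalar_matrix_assoc mult.commute)

definition admissible :: "int \<Rightarrow> nat \<Rightarrow> bool list set" where
  "admissible k n = {A. length A = Suc n \<and> (\<forall>i\<le>n. A ! i \<in> allowed (k + int i))}"

definition weight :: "bool list \<Rightarrow> real" where
  "weight A = (\<Sum>j<length A - 1. f (A ! j) (A ! Suc j))"

lemma finite_admissible: "finite (admissible k n)"
  by (rule finite_subset[OF _ finite_list_length[of "Suc n"]]) (auto simp: admissible_def)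

lemma admissible_0: "admissible k 0 = (\<lambda>c. [c]) ` allowed k"
proof (intro set_eqI iffI)
  fix A assume "A \<in> admissible k 0"
  then have "length A = 1" "A ! 0 \<in> allowed k" by (auto simp: admissible_def)
  then show "A \<in> (\<lambda>c. [c]) ` allowed k"
    by (metis One_nat_def image_eqI length_0_conv length_Suc_conv nth_Cons_0)
qed (auto simp: admissible_def)

lemma admissible_Suc:
  "admissible k (Suc n) = (\<lambda>(A, c). A @ [c]) ` (admissible k n \<times> allowed (k + int (Suc n)))"
proof (intro set_eqI iffI)
  fix B assume B: "B \<in> admissible k (Suc n)"
  then have "length B = Suc (Suc n)" by (simp add: admissible_def)
  then have "B = take (Suc n) B @ [B ! Suc n]"
    by (metis lessI take_Suc_conv_app_nth take_all order_refl)
  moreover have "take (Suc n) B \<in> admissible k n" "B ! Suc n \<in> allowed (k + int (Suc n))"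
    using B by (auto simp: admissible_def)
  ultimately show "B \<in> (\<lambda>(A, c). A @ [c]) ` (admissible k n \<times> allowed (k + int (Suc n)))"
    by (intro image_eqI[of _ _ "(take (Suc n) B, B ! Suc n)"]) auto
qed (auto simp: admissible_def nth_append le_Suc_eq)

lemma weight_snoc:
  assumes "length A = Suc n"
  shows "weight (A @ [c]) = weight A + f (last A) c"
proof -
  have "last A = A ! n"
    using assms by (metis diff_Suc_1 last_conv_nth length_0_conv nat.distinct(1))
  then show ?thesis using assms by (simp add: weight_def nth_append)
qed

lemma sum_admissible_last:
  "(\<Sum>A\<in>admissible k n. if last A = b then 2 powr weight A else 0)
     = (\<Sum>a\<in>UNIV. restricted_pow M k n $ a $ b)"
proof (induction n arbitrary: b)
  case 0
  have "(\<Sum>A\<in>admissible k 0. if last A = b then 2 powr weight A else 0)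
      = (\<Sum>c\<in>allowed k. if c = b then 1 else 0)"
    unfolding admissible_0 by (subst sum.reindex) (auto simp: inj_on_def weight_def)
  also have "\<dots> = (if b \<in> allowed k then 1 else 0)"
    by (simp add: allowed_def)
  also have "\<dots> = (\<Sum>a\<in>UNIV. restricted_pow M k 0 $ a $ b)"
    by (cases b) (auto simp: sum_UNIV_bool diag_allowed_def)
  finally show ?case .
next
  case (Suc n)
  let ?D = "allowed (k + int (Suc n))"
  let ?g = "\<lambda>A. 2 powr weight A * M $ last A $ b"
  have inj: "inj_on (\<lambda>(A, c). A @ [c]) (admissible k n \<times> ?D)"
    by (auto simp: inj_on_def)
  have "(\<Sum>A\<in>admissible k (Suc n). if last A = b then 2 powr weight A else 0)
      = (\<Sum>(A, c)\<in>admissible k n \<times> ?D. if c = b then ?g A else 0)"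
    unfolding admissible_Suc sum.reindex[OF inj]
    by (intro sum.cong refl) (auto simp: admissible_def weight_snoc powr_add M_entry)
  also have "\<dots> = (\<Sum>A\<in>admissible k n. \<Sum>c\<in>?D. if c = b then ?g A else 0)"
    by (rule sum.cartesian_product[symmetric])
  also have "\<dots> = (if b \<in> ?D then 1 else 0) * (\<Sum>A\<in>admissible k n. ?g A)"
    by (simp add: sum_distrib_left sum.delta)
  also have "(\<Sum>A\<in>admissible k n. ?g A)
      = (\<Sum>A\<in>admissible k n. \<Sum>d\<in>UNIV. (if last A = d then 2 powr weight A else 0) * M $ d $ b)"
    by (intro sum.cong refl) (simp add: sum_UNIV_bool)
  also have "\<dots> = (\<Sum>d\<in>UNIV. (\<Sum>A\<in>admissible k n. if last A = d then 2 powr weight A else 0) * M $ d $ b)"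
    by (subst sum.swap) (simp add: sum_distrib_right)
  also have "\<dots> = (\<Sum>d\<in>UNIV. (\<Sum>a\<in>UNIV. restricted_pow M k n $ a $ d) * M $ d $ b)"
    by (simp add: Suc)
  also have "(if b \<in> ?D then 1 else 0) * \<dots> = (\<Sum>a\<in>UNIV. restricted_pow M k (Suc n) $ a $ b)"
    by (cases b) (auto simp: matmul_entry diag_allowed_def sum_UNIV_bool algebra_simps)
  finally show ?case .
qed

lemma sum_admissible_weight:
  "(\<Sum>A\<in>admissible k n. 2 powr weight A) = lp ^ n * entry_sum (restricted_pow N k n)"
proof -
  have "(\<Sum>A\<in>admissible k n. 2 powr weight A)
      = (\<Sum>A\<in>admissible k n. \<Sum>b\<in>UNIV. if last A = b then 2 powr weight A else 0)"
    by (rule sum.cong[OF refl]) (simp add: sum.delta)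
  also have "\<dots> = (\<Sum>b\<in>UNIV. \<Sum>A\<in>admissible k n. if last A = b then 2 powr weight A else 0)"
    by (rule sum.swap)
  also have "\<dots> = entry_sum (restricted_pow M k n)"
    unfolding sum_admissible_last entry_sum_def by (rule sum.swap)
  finally show ?thesis by (simp add: M_eq restricted_pow_scaleR entry_sum_scaleR)
qed

section \<open>Pressure from the growth of restricted products\<close>

abbreviation X :: "seq set" where "X \<equiv> interval_set w x"

abbreviation phi :: "seq \<Rightarrow> real" where "phi \<equiv> \<lambda>y. f (y 0) (y 1)"

lemma interval_set_allowed: "y \<in> X \<Longrightarrow> \<exists>k. \<forall>i. y i \<in> allowed (k + i)"
  by (auto simp: interval_set_def shift_def le_fun_def between_iff_allowed[symmetric] add.commute)

lemma blocks_admissible: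
  assumes "A \<in> blocks X (Suc n)"
  shows "\<exists>k\<in>{0..<int period}. A \<in> admissible k n"
proof -
  obtain y k0 where y: "y \<in> X" "A = map (\<lambda>i. y (k0 + int i)) [0..<Suc n]"
    using assms by (auto simp: blocks_def)
  obtain k1 where k1: "\<And>i. y i \<in> allowed (k1 + i)" using interval_set_allowed[OF y(1)] by blast
  let ?k = "(k1 + k0) mod int period"
  have "A ! i \<in> allowed (?k + int i)" if "i \<le> n" for i
    using y(2) that k1[of "k0 + int i"] by (simp add: allowed_mod add.assoc del: upt_Suc)
  then have "A \<in> admissible ?k n" unfolding admissible_def using y(2) by (simp del: upt_Suc)
  moreover have "?k \<in> {0..<int period}" using period_pos by simp
  ultimately show ?thesis by blast
qed

text \<open>Every admissible word is realized by a point of \<open>X\<close>: fill in \<open>w\<close> outside the window.\<close>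
lemma admissible_realized:
  assumes "A \<in> admissible k n"
  shows "\<exists>y\<in>X. map (\<lambda>i. y (int i)) [0..<Suc n] = A"
proof -
  have len: "length A = Suc n" and in_allowed: "\<And>i. i \<le> n \<Longrightarrow> A ! i \<in> allowed (k + int i)"
    using assms by (auto simp: admissible_def)
  define z where "z = (\<lambda>i. if k \<le> i \<and> i < k + int (Suc n) then A ! nat (i - k) else w i)"
  have "w i \<le> z i \<and> z i \<le> x i" for i
  proof (cases "k \<le> i \<and> i < k + int (Suc n)")
    case True
    then have "A ! nat (i - k) \<in> allowed i" using in_allowed[of "nat (i - k)"] by auto
    then show ?thesis using True between_iff_allowed[of i "A ! nat (i - k)"] by (simp add: z_def)
  qed (use w_le_x_at in \<open>auto simp: z_def\<close>)
  then have "shift k z \<in> X" by (auto simp: interval_set_def le_fun_def)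
  moreover have "map (\<lambda>i. shift k z (int i)) [0..<Suc n] = A"
    using len by (intro nth_equalityI) (auto simp: shift_def z_def add.commute simp del: upt_Suc)
  ultimately show ?thesis by blast
qed

lemma admissible_subset_blocks: "admissible k n \<subseteq> blocks X (Suc n)"
proof
  fix A assume "A \<in> admissible k n"
  then obtain y where "y \<in> X" "map (\<lambda>i. y (int i)) [0..<Suc n] = A" using admissible_realized by blast
  then show "A \<in> blocks X (Suc n)" unfolding blocks_def
    by (intro CollectI bexI[of _ y] exI[of _ 0]) auto
qed

lemma finite_blocks: "finite (blocks X (Suc n))"
  by (rule finite_subset[of _ "\<Union>k\<in>{0..<int period}. admissible k n"])
    (use blocks_admissible finite_admissible in auto)

definition f_max :: real where
  "f_max = \<bar>f False False\<bar> + \<bar>f False True\<bar> + \<bar>f True False\<bar> + \<bar>f True True\<bar>"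

lemma abs_f_le: "\<bar>f a b\<bar> \<le> f_max"
  by (cases a; cases b) (auto simp: f_max_def)

lemma birkhoff_eq_weight:
  assumes "map (\<lambda>i. y (int i)) [0..<Suc n] = A"
  shows "birkhoff phi (Suc n) y = weight A + f (A ! n) (y (int n + 1))"
proof -
  have len: "length A = Suc n" using assms[symmetric] by simp
  have A_nth: "i \<le> n \<Longrightarrow> A ! i = y (int i)" for i using assms[symmetric] by (auto simp del: upt_Suc)
  have "birkhoff phi (Suc n) y = (\<Sum>j<n. f (y (int j)) (y (int j + 1))) + f (y (int n)) (y (int n + 1))"
    by (simp add: birkhoff_def shift_def add.commute)
  also have "(\<Sum>j<n. f (y (int j)) (y (int j + 1))) = weight A"
    unfolding weight_def len by (intro sum.cong) (auto simp: A_nth add.commute)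
  finally show ?thesis using A_nth[of n] by simp
qed

lemma cylinder_sup_bounds:
  assumes "A \<in> blocks X (Suc n)"
  defines "T \<equiv> {y\<in>X. map (\<lambda>i. y (int i)) [0..<Suc n] = A}"
  shows "weight A - f_max \<le> (SUP y\<in>T. birkhoff phi (Suc n) y)"
    and "(SUP y\<in>T. birkhoff phi (Suc n) y) \<le> weight A + f_max"
proof -
  obtain k where "A \<in> admissible k n" using blocks_admissible[OF assms(1)] by blast
  then obtain y0 where y0: "y0 \<in> T" using admissible_realized unfolding T_def by blast
  have bounds: "weight A - f_max \<le> birkhoff phi (Suc n) y \<and> birkhoff phi (Suc n) y \<le> weight A + f_max"
    if "y \<in> T" for y
    using birkhoff_eq_weight[of y n A] that abs_f_le[of "A ! n" "y (int n + 1)"] by (auto simp: T_def)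
  show "(SUP y\<in>T. birkhoff phi (Suc n) y) \<le> weight A + f_max"
    using bounds y0 by (intro cSUP_least) auto
  have "bdd_above (birkhoff phi (Suc n) ` T)"
    using bounds by (intro bdd_aboveI[of _ "weight A + f_max"]) auto
  then show "weight A - f_max \<le> (SUP y\<in>T. birkhoff phi (Suc n) y)"
    using bounds y0 by (intro cSUP_upper2) auto
qed

definition partition_sum :: "nat \<Rightarrow> real" where
  "partition_sum m = (\<Sum>A\<in>blocks X m.
     2 powr (SUP y\<in>{y\<in>X. map (\<lambda>i. y (int i)) [0..<m] = A}. birkhoff phi m y))"

definition block_weight :: "nat \<Rightarrow> real" where
  "block_weight n = (\<Sum>A\<in>blocks X (Suc n). 2 powr weight A)"

lemma partition_sum_bounds:
  "2 powr (- f_max) * block_weight n \<le> partition_sum (Suc n)"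
  "partition_sum (Suc n) \<le> 2 powr f_max * block_weight n"
proof -
  have "2 powr (- f_max) * block_weight n = (\<Sum>A\<in>blocks X (Suc n). 2 powr (weight A - f_max))"
    by (simp add: block_weight_def sum_distrib_left powr_diff powr_minus divide_inverse mult.commute)
  also have "\<dots> \<le> partition_sum (Suc n)"
    unfolding partition_sum_def by (intro sum_mono) (use cylinder_sup_bounds(1) in auto)
  finally show "2 powr (- f_max) * block_weight n \<le> partition_sum (Suc n)" .
  have "partition_sum (Suc n) \<le> (\<Sum>A\<in>blocks X (Suc n). 2 powr (weight A + f_max))"
    unfolding partition_sum_def by (intro sum_mono) (use cylinder_sup_bounds(2) in auto)
  also have "\<dots> = 2 powr f_max * block_weight n"
    by (simp add: block_weight_def sum_distrib_left powr_add mult.commute)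
  finally show "partition_sum (Suc n) \<le> 2 powr f_max * block_weight n" .
qed

lemma block_weight_ge: "(\<Sum>A\<in>admissible k n. 2 powr weight A) \<le> block_weight n"
  unfolding block_weight_def by (rule sum_mono2[OF finite_blocks admissible_subset_blocks]) auto

lemma block_weight_le: "block_weight n \<le> (\<Sum>k\<in>{0..<int period}. \<Sum>A\<in>admissible k n. 2 powr weight A)"
proof -
  let ?B = "blocks X (Suc n)"
  have "block_weight n \<le> (\<Sum>A\<in>?B. \<Sum>k\<in>{0..<int period}. if A \<in> admissible k n then 2 powr weight A else 0)"
    unfolding block_weight_def
  proof (intro sum_mono)
    fix A assume "A \<in> ?B"
    then obtain k where k: "k \<in> {0..<int period}" "A \<in> admissible k n" using blocks_admissible by blast
    then show "2 powr weight A \<le> (\<Sum>k\<in>{0..<int period}. if A \<in> admissible k n then 2 powr weight A else 0)"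
      using member_le_sum[OF k(1), of "\<lambda>k. if A \<in> admissible k n then 2 powr weight A else 0"] by auto
  qed
  also have "\<dots> = (\<Sum>k\<in>{0..<int period}. \<Sum>A\<in>{A\<in>?B. A \<in> admissible k n}. 2 powr weight A)"
    by (subst sum.swap) (simp add: sum.inter_filter[OF finite_blocks])
  also have "\<dots> \<le> (\<Sum>k\<in>{0..<int period}. \<Sum>A\<in>admissible k n. 2 powr weight A)"
    by (intro sum_mono sum_mono2 finite_admissible) auto
  finally show ?thesis .
qed

lemma pressure_tendsto_of_growth:
  assumes "B > 0" and "c > 0"
    and growth: "\<And>k n. k \<in> {0..<int period} \<Longrightarrow>
      c * B ^ n \<le> entry_sum (restricted_pow N k n) \<and> entry_sum (restricted_pow N k n) \<le> C * B ^ n"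
  shows "pressure_seq X phi \<longlonglongrightarrow> log 2 (lp * B)"
proof -
  have lower: "(2 powr (- f_max) * c) * (lp * B) ^ n \<le> partition_sum (Suc n)" for n
  proof -
    have "c * B ^ n \<le> entry_sum (restricted_pow N 0 n)"
      using growth[of 0 n] period_pos by simp
    then have "lp ^ n * (c * B ^ n) \<le> (\<Sum>A\<in>admissible 0 n. 2 powr weight A)"
      unfolding sum_admissible_weight using lp_pos by (intro mult_left_mono) auto
    also have "\<dots> \<le> block_weight n"
      by (rule block_weight_ge)
    finally have "(2 powr (- f_max) * c) * (lp * B) ^ n \<le> 2 powr (- f_max) * block_weight n"
      by (simp add: power_mult_distrib mult_ac)
    then show ?thesis
      using partition_sum_bounds(1) by (rule order_trans)
  qed
  have upper: "partition_sum (Suc n) \<le> (2 powr f_max * (real period * C)) * (lp * B) ^ n" for n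
  proof -
    have "(\<Sum>A\<in>admissible k n. 2 powr weight A) \<le> lp ^ n * (C * B ^ n)"
      if "k \<in> {0..<int period}" for k
      unfolding sum_admissible_weight using growth[OF that, of n] lp_pos by (intro mult_left_mono) auto
    then have "block_weight n \<le> (\<Sum>k\<in>{0..<int period}. lp ^ n * (C * B ^ n))"
      by (intro order_trans[OF block_weight_le] sum_mono)
    then have "2 powr f_max * block_weight n \<le> (2 powr f_max * (real period * C)) * (lp * B) ^ n"
      by (simp add: power_mult_distrib mult_ac)
    with partition_sum_bounds(2) show ?thesis
      by (rule order_trans)
  qed
  have "(\<lambda>m. 1 / real m * log 2 (partition_sum m)) \<longlonglongrightarrow> log 2 (lp * B)"
    by (rule log_growth_rate_tendsto[OF _ _ lower upper]) (use \<open>c > 0\<close> \<open>B > 0\<close> lp_pos in auto)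
  moreover have "pressure_seq X phi = (\<lambda>m. 1 / real m * log 2 (partition_sum m))"
    by (simp add: fun_eq_iff pressure_seq_def partition_sum_def)
  ultimately show ?thesis by simp
qed

section \<open>Forced positions\<close>

definition forced :: "int \<Rightarrow> bool" where "forced i \<longleftrightarrow> w i = x i"

lemma forced_period_mult: "forced (i + int period * t) = forced i"
  by (simp add: forced_def w_period_mult x_period_mult)

lemma not_forced_iff: "\<not> forced i \<longleftrightarrow> w i = False \<and> x i = True"
  using w_le_x_at[of i] by (cases "w i"; cases "x i") (auto simp: forced_def)

definition diag_unit :: "bool \<Rightarrow> real^bool^bool" where
  "diag_unit c = (\<chi> a b. if a = c \<and> b = c then 1 else 0)"

lemma diag_allowed_not_forced: "\<not> forced i \<Longrightarrow> diag_allowed i = mat 1"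
  by (auto simp: diag_allowed_def allowed_def not_forced_iff mat_def vec_eq_iff)

lemma diag_allowed_forced: "forced i \<Longrightarrow> diag_allowed i = diag_unit (w i)"
  by (auto simp: diag_allowed_def allowed_def forced_def diag_unit_def vec_eq_iff)

lemma diag_unit_sandwich: "diag_unit c ** Y ** diag_unit c = Y $ c $ c *\<^sub>R diag_unit c"
  by (cases c) (auto simp: vec_eq_iff matmul_entry sum_UNIV_bool diag_unit_def)

lemma matmul_diag_unit_entry: "(Y ** diag_unit c) $ a $ d = (if d = c then Y $ a $ c else 0)"
  by (cases c; cases d) (auto simp: matmul_entry sum_UNIV_bool diag_unit_def)

lemma restricted_pow_entry_split:
  assumes "forced (t + int n1)"
  shows "restricted_pow A t (n1 + n2) $ a $ b
    = restricted_pow A t n1 $ a $ w (t + int n1) * restricted_pow A (t + int n1) n2 $ w (t + int n1) $ b"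
proof -
  let ?c = "w (t + int n1)"
  have R: "restricted_pow A t n1 = restricted_pow A t n1 ** diag_unit ?c"
    using restricted_pow_diag_right[of A t n1] diag_allowed_forced[OF assms] by simp
  have "restricted_pow A t (n1 + n2) $ a $ b
      = (\<Sum>d\<in>UNIV. restricted_pow A t n1 $ a $ d * restricted_pow A (t + int n1) n2 $ d $ b)"
    by (simp add: restricted_pow_add matmul_entry)
  also have "\<dots> = (\<Sum>d\<in>UNIV. (if d = ?c then restricted_pow A t n1 $ a $ ?c else 0)
      * restricted_pow A (t + int n1) n2 $ d $ b)"
    by (subst R) (simp add: matmul_diag_unit_entry)
  also have "\<dots> = restricted_pow A t n1 $ a $ ?c * restricted_pow A (t + int n1) n2 $ ?c $ b"
    by (cases ?c) (simp_all add: sum_UNIV_bool)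
  finally show ?thesis .
qed

lemma restricted_pow_N_nonneg: "restricted_pow N k n $ a $ b \<ge> 0"
proof (induction n arbitrary: a b)
  case (Suc n)
  show ?case unfolding restricted_pow.simps matmul_entry
    by (intro sum_nonneg mult_nonneg_nonneg)
      (auto simp: diag_allowed_def intro: Suc less_imp_le N_pos)
qed (simp add: diag_allowed_def)

lemma restricted_pow_N_pos:
  "a \<in> allowed k \<Longrightarrow> b \<in> allowed (k + int n) \<Longrightarrow> (n = 0 \<longrightarrow> a = b) \<Longrightarrow> restricted_pow N k n $ a $ b > 0"
proof (induction n arbitrary: b)
  case (Suc n)
  let ?c = "if n = 0 then a else w (k + int n)"
  have c: "?c \<in> allowed (k + int n)" using Suc.prems(1) by (simp add: allowed_def)
  have "restricted_pow N k n $ a $ ?c > 0"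
    by (rule Suc.IH[OF Suc.prems(1) c]) simp
  then have "restricted_pow N k n $ a $ ?c * N $ ?c $ b > 0"
    using N_pos by simp
  also have "\<dots> \<le> (restricted_pow N k n ** N) $ a $ b"
    by (intro matmul_entry_ge) (auto intro: restricted_pow_N_nonneg less_imp_le N_pos)
  also have "\<dots> = restricted_pow N k (Suc n) $ a $ b"
    using Suc.prems(2) by (cases b) (auto simp: matmul_entry diag_allowed_def sum_UNIV_bool)
  finally show ?case .
qed (simp add: diag_allowed_def)

lemma entry_sum_restricted_pow_pos: "entry_sum (restricted_pow N k n) > 0"
proof -
  let ?R = "restricted_pow N k n"
  have "0 < ?R $ w k $ w (k + int n)" by (rule restricted_pow_N_pos) (auto simp: allowed_def)
  also have "\<dots> \<le> (\<Sum>b\<in>UNIV. ?R $ w k $ b)"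
    by (rule member_le_sum) (auto intro: restricted_pow_N_nonneg)
  also have "\<dots> \<le> entry_sum ?R" unfolding entry_sum_def
    by (rule member_le_sum[of "w k" UNIV "\<lambda>a. \<Sum>b\<in>UNIV. ?R $ a $ b"])
      (auto intro: sum_nonneg restricted_pow_N_nonneg)
  finally show ?thesis .
qed

lemma restricted_pow_no_forced: "\<forall>i. \<not> forced i \<Longrightarrow> restricted_pow A k n = matpow A n"
  by (induction n) (simp_all add: diag_allowed_not_forced flip: matpow_Suc_right)

lemma growth_bounds_no_forced:
  assumes "\<forall>i. \<not> forced i"
  obtains c C where "c > 0" and "\<And>k n. c * 1 ^ n \<le> entry_sum (restricted_pow N k n)
    \<and> entry_sum (restricted_pow N k n) \<le> C * 1 ^ n"
proof -
  have "(\<lambda>n. entry_sum (matpow N n)) \<longlonglongrightarrow> (\<Sum>a\<in>UNIV. \<Sum>b\<in>UNIV. Cp a b)"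
    unfolding entry_sum_def by (intro tendsto_intros matpow_N_tendsto)
  moreover have "(\<Sum>a\<in>UNIV. \<Sum>b\<in>UNIV. Cp a b) > 0"
    by (simp add: sum_UNIV_bool Cp_pos add_pos_pos)
  moreover have "entry_sum (matpow N n) > 0" for n
    using entry_sum_restricted_pow_pos[of 0 n] restricted_pow_no_forced[OF assms] by simp
  ultimately obtain c C where "c > 0" "\<And>n. c \<le> entry_sum (matpow N n) \<and> entry_sum (matpow N n) \<le> C"
    using convergent_pos_bounds by metis
  then show ?thesis using that[of c C] restricted_pow_no_forced[OF assms] by simp
qed

section \<open>Return frequencies on the orbit of \<open>(w, x)\<close>\<close>

definition orbit_point :: "nat \<Rightarrow> seq \<times> seq" where
  "orbit_point t = (shift (int t) w, shift (int t) x)"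

lemma pair_orbit_eq: "pair_orbit w x = orbit_point ` {0..<period}"
proof (intro set_eqI iffI)
  fix z assume "z \<in> pair_orbit w x"
  then obtain n where z: "z = (shift n w, shift n x)" by (auto simp: pair_orbit_def)
  have "z = orbit_point (nat (n mod int period))"
    using z period_pos shift_mod_periodic[of w "int period" n, OF w_period]
      shift_mod_periodic[of x "int period" n, OF x_period] by (simp add: orbit_point_def)
  moreover have "nat (n mod int period) < period" using period_pos by (simp add: nat_less_iff)
  ultimately show "z \<in> orbit_point ` {0..<period}" by auto
qed (auto simp: pair_orbit_def orbit_point_def)

lemma inj_on_orbit_point: "inj_on orbit_point {0..<period}"
proof -
  have False if "i < j" "j < period" "orbit_point i = orbit_point j" for i j
  proof -
    have eq: "w (k + int i) = w (k + int j)" "x (k + int i) = x (k + int j)" for k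
      using that(3) by (auto simp: orbit_point_def shift_def fun_eq_iff)
    have "w (k + int (j - i)) = w k \<and> x (k + int (j - i)) = x k" for k
      using eq[of "k - int i"] that(1) by (auto simp: of_nat_diff algebra_simps)
    moreover have "0 < j - i" "j - i < period" using that by auto
    ultimately show False using period_minimal[of "j - i"] by blast
  qed
  then show ?thesis unfolding inj_on_def by (metis linorder_neqE_nat atLeastLessThan_iff)
qed

lemma measure_orbit:
  "measure (measure_pmf (pmf_of_set (pair_orbit w x))) C
     = real (card {t\<in>{0..<period}. orbit_point t \<in> C}) / real period"
proof -
  have "pair_orbit w x \<inter> C = orbit_point ` {t\<in>{0..<period}. orbit_point t \<in> C}"
    by (auto simp: pair_orbit_eq)
  moreover have "card (orbit_point ` {t\<in>{0..<period}. orbit_point t \<in> C})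
      = card {t\<in>{0..<period}. orbit_point t \<in> C}"
    by (rule card_image) (rule inj_on_subset[OF inj_on_orbit_point], auto)
  moreover have "pair_orbit w x \<noteq> {}" "finite (pair_orbit w x)" "card (pair_orbit w x) = period"
    using period_pos card_image[OF inj_on_orbit_point] by (auto simp: pair_orbit_eq)
  ultimately show ?thesis using measure_pmf_of_set[of "pair_orbit w x" C] by simp
qed

definition return_set :: "bool \<Rightarrow> bool \<Rightarrow> nat \<Rightarrow> (seq \<times> seq) set" where
  "return_set a b l = {(u, v). u 0 = a \<and> v 0 = a \<and>
     (\<forall>j::int. 1 \<le> j \<and> j \<le> int l - 2 \<longrightarrow> u j = False \<and> v j = True) \<and>
     u (int l - 1) = b \<and> v (int l - 1) = b}"

definition return_freq :: "bool \<Rightarrow> bool \<Rightarrow> nat \<Rightarrow> real" where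
  "return_freq a b l = measure (measure_pmf (pmf_of_set (pair_orbit w x))) (return_set a b l)"

lemma return_freq_eq_sum:
  "return_freq a b l = (\<Sum>t<period. if orbit_point t \<in> return_set a b l then 1 else 0) / real period"
proof -
  have "real (card {t\<in>{0..<period}. orbit_point t \<in> return_set a b l})
      = (\<Sum>t\<in>{t\<in>{0..<period}. orbit_point t \<in> return_set a b l}. 1)"
    by simp
  also have "\<dots> = (\<Sum>t<period. if orbit_point t \<in> return_set a b l then 1 else 0)"
    by (subst sum.inter_filter) (auto simp: atLeast0LessThan)
  finally show ?thesis by (simp add: return_freq_def measure_orbit)
qed

lemma orbit_point_in_return_set_iff:
  "orbit_point t \<in> return_set a b (Suc (Suc l)) \<longleftrightarrow>
     forced (int t) \<and> a = w (int t) \<and> (\<forall>j. 1 \<le> j \<and> j \<le> l \<longrightarrow> \<not> forced (int t + int j)) \<and>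
     forced (int t + int (Suc l)) \<and> b = w (int t + int (Suc l))"
proof -
  have "orbit_point t \<in> return_set a b (Suc (Suc l)) \<longleftrightarrow>
     w (int t) = a \<and> x (int t) = a \<and>
     (\<forall>j. 1 \<le> j \<and> j \<le> l \<longrightarrow> w (int t + int j) = False \<and> x (int t + int j) = True) \<and>
     w (int t + int (Suc l)) = b \<and> x (int t + int (Suc l)) = b"
    unfolding orbit_point_def return_set_def by (simp add: shift_def all_int_interval_iff_nat ac_simps)
  then show ?thesis
    by (simp only: not_forced_iff[symmetric]) (auto simp: forced_def)
qed

end

section \<open>Periods starting at a forced position\<close>

locale interval_pressure_forced = interval_pressure +
  fixes s0 :: int
  assumes forced_s0: "forced s0"
begin

definition period_weight :: real where
  "period_weight = restricted_pow N s0 period $ w s0 $ w s0"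

lemma period_weight_pos: "period_weight > 0"
  unfolding period_weight_def by (rule restricted_pow_N_pos) (auto simp: allowed_def w_period x_period)

lemma diag_allowed_s0: "diag_allowed (s0 + int period * t) = diag_unit (w s0)"
  using diag_allowed_period_mult[of s0 t] diag_allowed_forced[OF forced_s0] by simp

text \<open>Over one period starting at a forced position the restricted product collapses to a scalar
  multiple of the projection onto the forced symbol.\<close>
lemma restricted_pow_period_step:
  assumes "s = s0 + int period * t"
  shows "restricted_pow N s (period + m) = period_weight *\<^sub>R restricted_pow N s m"
proof -
  have D_s: "diag_allowed s = diag_unit (w s0)"
    using diag_allowed_s0 assms by simp
  have D_s_period: "diag_allowed (s + int period) = diag_unit (w s0)"
    using diag_allowed_s0[of "t + 1"] assms by (simp add: algebra_simps)
  have R_s: "restricted_pow N s m = diag_allowed s ** restricted_pow N s m" for m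
    using restricted_pow_add[of N s 0 m] by simp
  have "restricted_pow N s period = diag_allowed s ** restricted_pow N s period ** diag_allowed (s + int period)"
    using R_s[of period] restricted_pow_diag_right[of N s period] by simp
  also have "\<dots> = period_weight *\<^sub>R diag_unit (w s0)"
    using restricted_pow_period_mult[of N s0 t period] assms
    unfolding D_s D_s_period diag_unit_sandwich period_weight_def by simp
  finally have "restricted_pow N s period = period_weight *\<^sub>R diag_allowed s"
    by (simp add: D_s)
  moreover have "restricted_pow N (s + int period) m = restricted_pow N s m"
    using restricted_pow_period_mult[of N s 1 m] by simp
  ultimately show ?thesis
    by (simp add: restricted_pow_add flip: scalar_matrix_assoc R_s)
qed

lemma entry_sum_period_step:
  assumes "k \<in> {0..<int period}" and "n \<ge> period"
  shows "entry_sum (restricted_pow N k (n + period)) = period_weight * entry_sum (restricted_pow N k n)"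
proof -
  define s where "s = s0 + int period * ((k - s0) div int period + 1)"
  have "0 \<le> (k - s0) mod int period" "(k - s0) mod int period < int period"
    using period_pos by simp_all
  then have "k < s" "s \<le> k + int period"
    using mult_div_mod_eq[of "int period" "k - s0"] unfolding s_def distrib_left by linarith+
  define d where "d = nat (s - k)"
  have d: "s = k + int d" "d \<le> period"
    using \<open>k < s\<close> \<open>s \<le> k + int period\<close> by (auto simp: d_def)
  have "restricted_pow N k (n + period) = restricted_pow N k d ** restricted_pow N s (period + (n - d))"
    using d assms(2) restricted_pow_add[of N k d "period + (n - d)"] by (simp add: add.commute)
  also have "\<dots> = period_weight *\<^sub>R (restricted_pow N k d ** restricted_pow N s (n - d))"
    by (simp add: restricted_pow_period_step[OF s_def] matrix_scalar_ac scalar_matrix_assoc)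
  also have "restricted_pow N k d ** restricted_pow N s (n - d) = restricted_pow N k n"
    using d assms(2) restricted_pow_add[of N k d "n - d"] by simp
  finally show ?thesis by (simp add: entry_sum_scaleR)
qed

lemma growth_bounds_forced:
  obtains c C where "c > 0" and "\<And>k n. k \<in> {0..<int period} \<Longrightarrow>
    c * root period period_weight ^ n \<le> entry_sum (restricted_pow N k n)
    \<and> entry_sum (restricted_pow N k n) \<le> C * root period period_weight ^ n"
  using eventually_periodic_growth_bounds[of "{0..<int period}" period period_weight
      "\<lambda>k n. entry_sum (restricted_pow N k n)" period]
    period_pos period_weight_pos entry_sum_restricted_pow_pos entry_sum_period_step
  by (metis finite_atLeastLessThan_int)

lemma next_forced_exists: "\<exists>d::nat. d > 0 \<and> forced (t + int d)"
proof -
  define d where "d = nat ((s0 - t - 1) mod int period) + 1"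
  have "t + int d = s0 + int period * (- ((s0 - t - 1) div int period))"
    using mult_div_mod_eq[of "int period" "s0 - t - 1"] period_pos by (simp add: d_def algebra_simps)
  then have "forced (t + int d)" using forced_period_mult forced_s0 by metis
  moreover have "d > 0" by (simp add: d_def)
  ultimately show ?thesis by blast
qed

definition next_forced :: "int \<Rightarrow> nat" where
  "next_forced t = (LEAST d. d > 0 \<and> forced (t + int d))"

lemma next_forced_pos: "next_forced t > 0"
  and forced_next_forced: "forced (t + int (next_forced t))"
  using LeastI_ex[OF next_forced_exists] unfolding next_forced_def[symmetric] by auto

lemma not_forced_before_next: "0 < d \<Longrightarrow> d < next_forced t \<Longrightarrow> \<not> forced (t + int d)"
  unfolding next_forced_def using not_less_Least by blast

lemma next_forced_le: "0 < d \<Longrightarrow> forced (t + int d) \<Longrightarrow> next_forced t \<le> d"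
  unfolding next_forced_def by (rule Least_le) simp

lemma next_forced_le_period: "forced t \<Longrightarrow> next_forced t \<le> period"
  using next_forced_le[of period t] period_pos forced_period_mult[of t 1] by simp

lemma next_forced_period: "next_forced (t + int period) = next_forced t"
  using forced_period_mult[of "t + int _" 1] unfolding next_forced_def by (simp add: algebra_simps)

lemma orbit_point_in_return_set_iff_next:
  "orbit_point t \<in> return_set a b (Suc (Suc l)) \<longleftrightarrow>
     forced (int t) \<and> a = w (int t) \<and> Suc l = next_forced (int t) \<and> b = w (int t + int (next_forced (int t)))"
proof -
  have "(\<forall>j. 1 \<le> j \<and> j \<le> l \<longrightarrow> \<not> forced (int t + int j)) \<and> forced (int t + int (Suc l))
      \<longleftrightarrow> Suc l = next_forced (int t)" (is "?gap \<longleftrightarrow> _")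
  proof
    assume ?gap
    then have "next_forced (int t) \<le> Suc l" using next_forced_le[of "Suc l" "int t"] by simp
    moreover have "\<not> next_forced (int t) \<le> l"
      using \<open>?gap\<close> forced_next_forced[of "int t"] next_forced_pos[of "int t"] by auto
    ultimately show "Suc l = next_forced (int t)" by simp
  next
    assume "Suc l = next_forced (int t)"
    then show ?gap using not_forced_before_next[of _ "int t"] forced_next_forced[of "int t"] by auto
  qed
  then show ?thesis unfolding orbit_point_in_return_set_iff by (auto simp del: of_nat_Suc)
qed

text \<open>The value \<open>1\<close> at free positions makes products over a period telescope.\<close>
definition gap_weight :: "int \<Rightarrow> real" where
  "gap_weight t = (if forced t then matpow N (next_forced t) $ w t $ w (t + int (next_forced t)) else 1)"

lemma gap_weight_pos: "gap_weight t > 0"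
  by (simp add: gap_weight_def matpow_N_pos next_forced_pos)

lemma gap_weight_period: "gap_weight (t + int period) = gap_weight t"
  using forced_period_mult[of t 1] w_period w_period_mult[of "t + int (next_forced t)" 1]
  by (simp add: gap_weight_def next_forced_period algebra_simps)

lemma restricted_pow_before_next:
  "forced t \<Longrightarrow> i < next_forced t \<Longrightarrow> restricted_pow N t i = diag_allowed t ** matpow N i"
proof (induction i)
  case (Suc i)
  then have "diag_allowed (t + int (Suc i)) = mat 1"
    using not_forced_before_next[of "Suc i" t] diag_allowed_not_forced by simp
  then have "restricted_pow N t (Suc i) = (diag_allowed t ** matpow N i) ** N"
    using Suc by simp
  then show ?case by (simp only: matpow_Suc_right matrix_mul_assoc)
qed simp

lemma restricted_pow_next:
  assumes "forced t"
  shows "restricted_pow N t (next_forced t) $ w t $ w (t + int (next_forced t)) = gap_weight t"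
proof -
  obtain m where m: "next_forced t = Suc m" using next_forced_pos[of t] gr0_implies_Suc by blast
  have "restricted_pow N t (Suc m) = (diag_allowed t ** matpow N m) ** N ** diag_allowed (t + int (Suc m))"
    using restricted_pow_before_next[OF assms, of m] m by simp
  also have "\<dots> = diag_unit (w t) ** matpow N (Suc m) ** diag_unit (w (t + int (Suc m)))"
    using diag_allowed_forced[OF assms] diag_allowed_forced[OF forced_next_forced[of t]] m
    by (simp only: matpow_Suc_right matrix_mul_assoc)
  finally have "restricted_pow N t (next_forced t)
      = diag_unit (w t) ** matpow N (next_forced t) ** diag_unit (w (t + int (next_forced t)))"
    unfolding m .
  then show ?thesis
    using assms by (cases "w t"; cases "w (t + int (next_forced t))")
      (auto simp: gap_weight_def matmul_entry sum_UNIV_bool diag_unit_def)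
qed

lemma prod_gap_weight_until_next:
  assumes "forced t"
  shows "(\<Prod>i<next_forced t. gap_weight (t + int i)) = gap_weight t"
proof -
  obtain m where m: "next_forced t = Suc m" using next_forced_pos[of t] gr0_implies_Suc by blast
  have "gap_weight (t + int (Suc i)) = 1" if "i < m" for i
    using not_forced_before_next[of "Suc i" t] that m by (simp add: gap_weight_def)
  then show ?thesis unfolding m prod.lessThan_Suc_shift by simp
qed

lemma restricted_pow_forced_entry:
  "forced t \<Longrightarrow> forced (t + int n) \<Longrightarrow>
    restricted_pow N t n $ w t $ w (t + int n) = (\<Prod>i<n. gap_weight (t + int i))"
proof (induction n arbitrary: t rule: less_induct)
  case (less n)
  show ?case
  proof (cases "n = 0")
    case True
    then show ?thesis by (simp add: diag_allowed_def allowed_def)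
  next
    case False
    let ?g = "next_forced t"
    have g: "0 < ?g" "?g \<le> n" using next_forced_pos[of t] next_forced_le[of n t] False less.prems by auto
    have t_n: "t + int ?g + int (n - ?g) = t + int n" using g by simp
    have "restricted_pow N t n $ w t $ w (t + int n)
        = restricted_pow N t (?g + (n - ?g)) $ w t $ w (t + int n)"
      using g by simp
    also have "\<dots> = gap_weight t * restricted_pow N (t + int ?g) (n - ?g) $ w (t + int ?g) $ w (t + int n)"
      by (simp only: restricted_pow_entry_split[OF forced_next_forced] restricted_pow_next[OF less.prems(1)])
    also have "\<dots> = gap_weight t * (\<Prod>i<n - ?g. gap_weight (t + int ?g + int i))"
      using less.IH[of "n - ?g" "t + int ?g"] forced_next_forced[of t] less.prems(2) g
      by (simp add: t_n)
    also have "\<dots> = (\<Prod>i<n. gap_weight (t + int i))"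
      using prod.atLeastLessThan_concat[of 0 ?g n "\<lambda>i. gap_weight (t + int i)"] g
        prod.shift_bounds_nat_ivl[of "\<lambda>i. gap_weight (t + int i)" 0 ?g "n - ?g"]
      by (simp add: prod_gap_weight_until_next[OF less.prems(1), unfolded lessThan_atLeast0]
          lessThan_atLeast0 algebra_simps)
    finally show ?thesis .
  qed
qed

lemma log_period_weight: "log 2 period_weight = (\<Sum>i<period. log 2 (gap_weight (int i)))"
proof -
  have prod: "period_weight = (\<Prod>i<period. gap_weight (s0 + int i))"
    using restricted_pow_forced_entry[OF forced_s0, of period] forced_period_mult[of s0 1] forced_s0
    by (simp add: period_weight_def w_period)
  have "log 2 period_weight = (\<Sum>i<period. log 2 (gap_weight (s0 + int i)))"
    unfolding prod log_def using gap_weight_pos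
    by (subst ln_prod) (auto simp: sum_divide_distrib dest: less_imp_neq[symmetric])
  also have "\<dots> = (\<Sum>i<period. log 2 (gap_weight (int i)))"
    by (rule sum_periodic_shift) (simp_all add: gap_weight_period period_pos)
  finally show ?thesis .
qed

section \<open>Identification of the limit\<close>

lemma return_freq_vanish: "period \<le> l \<Longrightarrow> return_freq a b (l + 2) = 0"
proof -
  assume "period \<le> l"
  then have "orbit_point t \<notin> return_set a b (Suc (Suc l))" for t
    using next_forced_le_period[of "int t"] unfolding orbit_point_in_return_set_iff_next by auto
  then show ?thesis by (simp add: return_freq_eq_sum)
qed

text \<open>Each orbit point lies in at most one return set, namely the one recording the symbol at
  the forced position \<open>t\<close>, the length of the following free stretch and the next forced symbol.\<close>
lemma sum_return_sets_log:
  "(\<Sum>a\<in>UNIV. \<Sum>b\<in>UNIV. \<Sum>l<period.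
      if orbit_point t \<in> return_set a b (l + 2) then log 2 (matpow N (Suc l) $ a $ b) else 0)
    = log 2 (gap_weight (int t))"
proof (cases "forced (int t)")
  case False
  then show ?thesis by (simp add: orbit_point_in_return_set_iff_next gap_weight_def)
next
  case True
  let ?a = "w (int t)" and ?g = "next_forced (int t)"
  let ?b = "w (int t + int ?g)"
  have "?g - 1 < period" using next_forced_le_period[OF True] next_forced_pos[of "int t"] by simp
  moreover have "(if orbit_point t \<in> return_set a b (l + 2) then log 2 (matpow N (Suc l) $ a $ b) else 0)
      = (if l = ?g - 1 then if b = ?b then if a = ?a then log 2 (matpow N (Suc l) $ a $ b) else 0
         else 0 else 0)" for a b l
    using True next_forced_pos[of "int t"] unfolding add_2_eq_Suc' orbit_point_in_return_set_iff_next
    by auto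
  ultimately show ?thesis
    using True next_forced_pos[of "int t"] by (simp add: sum.delta gap_weight_def)
qed

lemma sum_return_freq_log:
  "(\<Sum>a\<in>UNIV. \<Sum>b\<in>UNIV. \<Sum>l<period. return_freq a b (l + 2) * log 2 (matpow N (Suc l) $ a $ b))
    = log 2 period_weight / real period"
proof -
  let ?F = "\<lambda>a b l t. (if orbit_point t \<in> return_set a b (l + 2) then log 2 (matpow N (Suc l) $ a $ b)
      else 0) / real period"
  have "return_freq a b (l + 2) * log 2 (matpow N (Suc l) $ a $ b) = (\<Sum>t<period. ?F a b l t)" for a b l
    unfolding return_freq_eq_sum sum_divide_distrib sum_distrib_right by (intro sum.cong refl) simp
  then have "(\<Sum>a\<in>UNIV. \<Sum>b\<in>UNIV. \<Sum>l<period. return_freq a b (l + 2) * log 2 (matpow N (Suc l) $ a $ b))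
      = (\<Sum>a\<in>UNIV. \<Sum>b\<in>UNIV. \<Sum>l<period. \<Sum>t<period. ?F a b l t)"
    by (simp only:)
  also have "\<dots> = (\<Sum>t<period. \<Sum>a\<in>UNIV. \<Sum>b\<in>UNIV. \<Sum>l<period. ?F a b l t)"
    by (rule sum_swap_innermost)
  also have "\<dots> = (\<Sum>t<period. log 2 (gap_weight (int t))) / real period"
    by (simp only: sum_divide_distrib[symmetric] sum_return_sets_log)
  finally show ?thesis by (simp add: log_period_weight)
qed

lemma pressure_formula_forced:
  "log 2 lp + (\<Sum>a\<in>UNIV. \<Sum>b\<in>UNIV. \<Sum>l. return_freq a b (l + 2) * log 2 (Cp a b))
     + (\<Sum>a\<in>UNIV. \<Sum>b\<in>UNIV. \<Sum>l. return_freq a b (l + 2) * log 2 (1 + Cm a b / Cp a b * (lm / lp) ^ (l + 1)))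
   = log 2 lp + log 2 period_weight / real period"
proof -
  have finite_sum: "(\<Sum>l. return_freq a b (l + 2) * g l) = (\<Sum>l<period. return_freq a b (l + 2) * g l)"
    for a b g
    by (rule suminf_finite) (auto simp: return_freq_vanish[unfolded add_2_eq_Suc'])
  have "(\<Sum>a\<in>UNIV. \<Sum>b\<in>UNIV. \<Sum>l. return_freq a b (l + 2) * log 2 (Cp a b))
      + (\<Sum>a\<in>UNIV. \<Sum>b\<in>UNIV. \<Sum>l. return_freq a b (l + 2) * log 2 (1 + Cm a b / Cp a b * (lm / lp) ^ Suc l))
    = (\<Sum>a\<in>UNIV. \<Sum>b\<in>UNIV. \<Sum>l<period. return_freq a b (l + 2) * log 2 (matpow N (Suc l) $ a $ b))"
    by (simp only: finite_sum log_matpow_N_entry distrib_left sum.distrib)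
  then show ?thesis
    by (simp only: Suc_eq_plus1[symmetric] add.assoc sum_return_freq_log)
qed

end

context interval_pressure
begin

lemma pressure_formula_no_forced:
  assumes "\<forall>i. \<not> forced i"
  shows "log 2 lp + (\<Sum>a\<in>UNIV. \<Sum>b\<in>UNIV. \<Sum>l. return_freq a b (l + 2) * log 2 (Cp a b))
     + (\<Sum>a\<in>UNIV. \<Sum>b\<in>UNIV. \<Sum>l. return_freq a b (l + 2) * log 2 (1 + Cm a b / Cp a b * (lm / lp) ^ (l + 1)))
   = log 2 lp"
  using assms by (simp add: return_freq_eq_sum orbit_point_in_return_set_iff)

lemma pressure_tendsto:
  "pressure_seq X phi \<longlonglongrightarrow> log 2 lp
     + (\<Sum>a\<in>UNIV. \<Sum>b\<in>UNIV. \<Sum>l. return_freq a b (l + 2) * log 2 (Cp a b))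
     + (\<Sum>a\<in>UNIV. \<Sum>b\<in>UNIV. \<Sum>l. return_freq a b (l + 2) * log 2 (1 + Cm a b / Cp a b * (lm / lp) ^ (l + 1)))"
proof (cases "\<exists>s0. forced s0")
  case True
  then obtain s0 where "forced s0" by blast
  then interpret interval_pressure_forced w x f lp lm Cp Cm s0 by unfold_locales
  obtain c C where "c > 0" and growth: "\<And>k n. k \<in> {0..<int period} \<Longrightarrow>
      c * root period period_weight ^ n \<le> entry_sum (restricted_pow N k n)
      \<and> entry_sum (restricted_pow N k n) \<le> C * root period period_weight ^ n"
    using growth_bounds_forced by blast
  have "root period period_weight > 0" using period_weight_pos period_pos by simp
  then have "pressure_seq X phi \<longlonglongrightarrow> log 2 (lp * root period period_weight)"
    using \<open>c > 0\<close> growth by (rule pressure_tendsto_of_growth)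
  moreover have "log 2 (lp * root period period_weight) = log 2 lp + log 2 period_weight / real period"
    using lp_pos period_weight_pos period_pos by (simp add: log_mult log_root)
  ultimately show ?thesis by (simp only: pressure_formula_forced)
next
  case False
  then obtain c C where "c > 0" and "\<And>k n. c * 1 ^ n \<le> entry_sum (restricted_pow N k n)
      \<and> entry_sum (restricted_pow N k n) \<le> C * 1 ^ n"
    using growth_bounds_no_forced by blast
  then have "pressure_seq X phi \<longlonglongrightarrow> log 2 (lp * 1)"
    by (intro pressure_tendsto_of_growth) auto
  moreover have "\<forall>i. \<not> forced i" using False by blast
  ultimately show ?thesis unfolding pressure_formula_no_forced[OF \<open>\<forall>i. \<not> forced i\<close>] by simp
qed

end

theorem theorem6p2:
  fixes w x :: seq
    and f :: "bool \<Rightarrow> bool \<Rightarrow> real"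
    and lp lm :: real
    and Cp Cm :: "bool \<Rightarrow> bool \<Rightarrow> real"
  assumes "periodic w" and "periodic x" and "w \<le> x"
    and "is_eigenvalue (\<chi> a b. 2 powr f a b) lp"
    and "is_eigenvalue (\<chi> a b. 2 powr f a b) lm"
    and "lm < lp" and "lp > 0" and "lp > \<bar>lm\<bar>"
    and "\<And>a b n. n \<ge> 1 \<Longrightarrow>
           matpow (\<chi> a b. 2 powr f a b) (n - 1) $ a $ b = Cp a b * lp ^ (n - 1) + Cm a b * lm ^ (n - 1)"
  shows
    "let \<rho> = measure_pmf (pmf_of_set (pair_orbit w x));
         m = (\<lambda>a b (l::nat). measure \<rho> {(u, v). u 0 = a \<and> v 0 = a \<and>
                (\<forall>j::int. 1 \<le> j \<and> j \<le> int l - 2 \<longrightarrow> u j = False \<and> v j = True) \<and>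
                u (int l - 1) = b \<and> v (int l - 1) = b})
     in (pressure_seq (interval_set w x) (\<lambda>y. f (y 0) (y 1)))
        \<longlonglongrightarrow> log 2 lp
            + (\<Sum>a\<in>UNIV. \<Sum>b\<in>UNIV. \<Sum>l. m a b (l + 2) * log 2 (Cp a b))
            + (\<Sum>a\<in>UNIV. \<Sum>b\<in>UNIV. \<Sum>l. m a b (l + 2) *
                 log 2 (1 + Cm a b / Cp a b * (lm / lp) ^ (l + 1)))"
proof -
  interpret interval_pressure w x f lp lm Cp Cm
    using assms by unfold_locales auto
  show ?thesis
    using pressure_tendsto unfolding Let_def return_freq_def return_set_def .
qed

end
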